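(* Let $C\subseteq\mathbb{R}^2$ be a square and $S$ the family of all squares in $\mathbb{R}^2$. Then $\mathrm{PropEF}(C,2,S)\ge 1/4$.
   Context: A value measure on $C$ is $V(X)=\int_X v$ with $v$ non-negative, bounded, integrable on $C$, $V(C)<\infty$; $V^S(X):=\sup\{V(s):s\in S,s\subseteq X\}$. For $n$ agents with value measures $V_1,\dots,V_n$, an $S$-allocation is $(X_1,\dots,X_n)$ with $X_i\in S$ pairwise disjoint and $\bigcup_i X_i\subseteq C$; it is envy-free if $V_i^S(X_i)\ge V_i^S(X_j)$ for all $i,j$. $\mathrm{PropEF}(C,n,S):=\inf_{V_1,\dots,V_n}\sup_X\min_i V_i(X_i)/V_i(C)$, the infimum over all $n$-tuples of value measures on $C$ and the supremum over envy-free $S$-allocations. *)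

theory Defs
  imports "HOL-Analysis.Analysis"
begin

definition is_square :: "(real^2) set \<Rightarrow> bool" where
  "is_square Q \<longleftrightarrow>
     (\<exists>c u w r. r > 0 \<and> norm u = 1 \<and> norm w = 1 \<and> u \<bullet> w = 0 \<and>
        Q = {c + (a * r) *\<^sub>R u + (b * r) *\<^sub>R w | a b. a \<in> {0..1} \<and> b \<in> {0..1}})"

definition value_density :: "(real^2 \<Rightarrow> real) \<Rightarrow> (real^2) set \<Rightarrow> bool" where
  "value_density v C \<longleftrightarrow>
     (\<forall>x\<in>C. 0 \<le> v x) \<and> bounded (v ` C) \<and> v integrable_on C \<and> 0 < integral C v"

definition val :: "(real^2 \<Rightarrow> real) \<Rightarrow> (real^2) set \<Rightarrow> real" where
  "val v X = integral X v"

definition val_S :: "(real^2 \<Rightarrow> real) \<Rightarrow> (real^2) set \<Rightarrow> real" where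
  "val_S v X = Sup {val v s | s. is_square s \<and> s \<subseteq> X}"

definition ef_square_alloc2 ::
  "(real^2) set \<Rightarrow> (real^2 \<Rightarrow> real) \<Rightarrow> (real^2 \<Rightarrow> real) \<Rightarrow> (real^2) set \<Rightarrow> (real^2) set \<Rightarrow> bool" where
  "ef_square_alloc2 C v1 v2 X1 X2 \<longleftrightarrow>
     is_square X1 \<and> is_square X2 \<and> X1 \<union> X2 \<subseteq> C \<and>
     interior X1 \<inter> interior X2 = {} \<and>
     val_S v1 X1 \<ge> val_S v1 X2 \<and> val_S v2 X2 \<ge> val_S v2 X1"

end

theory Submission
  imports Defs
begin

(* Pull both densities back to the unit square along a similarity chart of C, chosen (by a
   reflection) so that the first agent's most valuable quarter is [0,1/2]^2. For t in [0,1/2]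
   take the corner square [0,t]^2 and the three squares of side 1-t in the other corners: they
   cover the unit square, and each meets the corner square only in its boundary. Let h_i(t) be
   agent i's value of the corner square minus that of its best far square. Then h_i(0) < 0,
   h_1(1/2) >= 0, and h_i is Lipschitz because the densities are bounded and the areas of the
   squares vary Lipschitz-continuously; so max h_1 h_2 vanishes at some t > 0. The agent with
   h_i(t) = 0 takes the corner square, the other one its best far square. Both are envy-free, and
   since each agent's piece is its best among four squares covering C, it is worth at least 1/4 of
   C; so the bound holds even with epsilon = 0. *)

section \<open>Squares in the unit square\<close>

definition axis_square :: "real \<Rightarrow> real \<Rightarrow> real \<Rightarrow> (real^2) set" where
  "axis_square x y s = cbox (vector [x, y]) (vector [x + s, y + s])"

abbreviation unit_square :: "(real^2) set" where
  "unit_square \<equiv> axis_square 0 0 1"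

lemma mem_axis_square:
  "p \<in> axis_square x y s \<longleftrightarrow> x \<le> p$1 \<and> p$1 \<le> x + s \<and> y \<le> p$2 \<and> p$2 \<le> y + s"
  unfolding axis_square_def mem_box_cart forall_2 by auto

lemma mem_interior_axis_square:
  "p \<in> interior (axis_square x y s) \<longleftrightarrow> x < p$1 \<and> p$1 < x + s \<and> y < p$2 \<and> p$2 < y + s"
  unfolding axis_square_def interior_cbox mem_box_cart forall_2 by auto

lemma axis_square_subset:
  "x \<le> x' \<Longrightarrow> y \<le> y' \<Longrightarrow> x' + s' \<le> x + s \<Longrightarrow> y' + s' \<le> y + s \<Longrightarrow>
    axis_square x' y' s' \<subseteq> axis_square x y s"
  by (auto simp: mem_axis_square)

lemma measure_axis_square:
  assumes "0 \<le> s"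
  shows "measure lborel (axis_square x y s) = s\<^sup>2"
proof -
  have "vector [x, y] \<in> axis_square x y s"
    using assms by (simp add: mem_axis_square)
  then have "axis_square x y s \<noteq> {}"
    by blast
  then show ?thesis
    by (simp add: content_cbox_cart UNIV_2 power2_eq_square axis_square_def)
qed

lemma integral_cbox_diff_bounds:
  fixes f :: "'a::euclidean_space \<Rightarrow> real"
  assumes sub: "cbox a b \<subseteq> cbox c d" and f: "f integrable_on cbox c d"
    and bounds: "\<And>x. x \<in> cbox c d \<Longrightarrow> 0 \<le> f x \<and> f x \<le> M"
  shows "integral (cbox a b) f \<le> integral (cbox c d) f"
    and "integral (cbox c d) f - integral (cbox a b) f \<le>
           M * (measure lborel (cbox c d) - measure lborel (cbox a b))"
proof -
  have fab: "f integrable_on cbox a b"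
    using integrable_on_subcbox sub f by blast
  show "integral (cbox a b) f \<le> integral (cbox c d) f"
    using integral_subset_le[OF sub fab f] bounds by blast
  have "integral (cbox a b) (\<lambda>x. M - f x) \<le> integral (cbox c d) (\<lambda>x. M - f x)"
    by (rule integral_subset_le[OF sub]) (use fab f bounds in \<open>auto intro: integrable_diff\<close>)
  moreover have "integral (cbox k l) (\<lambda>x. M - f x) = M * measure lborel (cbox k l) - integral (cbox k l) f"
    if "f integrable_on cbox k l" for k l
    by (simp add: integral_diff[OF integrable_const that] mult.commute)
  ultimately show "integral (cbox c d) f - integral (cbox a b) f \<le>
      M * (measure lborel (cbox c d) - measure lborel (cbox a b))"
    using fab f by (simp add: algebra_simps)
qed

lemma lipschitz_on_integral_nested_cboxes:
  fixes f :: "'a::euclidean_space \<Rightarrow> real" and B :: "real \<Rightarrow> 'a set"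
  assumes "0 \<le> M" and measure: "L-lipschitz_on T (\<lambda>t. measure lborel (B t))"
    and cbox: "\<And>t. t \<in> T \<Longrightarrow> \<exists>a b. B t = cbox a b"
    and f: "\<And>t. t \<in> T \<Longrightarrow> f integrable_on B t"
    and bounds: "\<And>t x. t \<in> T \<Longrightarrow> x \<in> B t \<Longrightarrow> 0 \<le> f x \<and> f x \<le> M"
    and nested: "\<And>s t. s \<in> T \<Longrightarrow> t \<in> T \<Longrightarrow> B s \<subseteq> B t \<or> B t \<subseteq> B s"
  shows "(M * L)-lipschitz_on T (\<lambda>t. integral (B t) f)"
proof (rule lipschitz_onI)
  show "0 \<le> M * L"
    using assms(1) lipschitz_on_nonneg[OF measure] by simp
  have le: "dist (integral (B t) f) (integral (B s) f) \<le> M * dist (measure lborel (B t)) (measure lborel (B s))"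
    if st: "s \<in> T" "t \<in> T" "B s \<subseteq> B t" for s t
  proof -
    obtain a b c d where ab: "B s = cbox a b" and cd: "B t = cbox c d"
      using cbox st(1,2) by metis
    have "f integrable_on cbox c d" "\<And>x. x \<in> cbox c d \<Longrightarrow> 0 \<le> f x \<and> f x \<le> M"
      using f[OF st(2)] bounds[OF st(2)] by (simp_all add: cd)
    then show ?thesis
      using integral_cbox_diff_bounds[of a b c d f M] content_subset[of a b c d] st(3)
      by (auto simp: dist_real_def ab cd)
  qed
  fix s t assume st: "s \<in> T" "t \<in> T"
  have "dist (integral (B s) f) (integral (B t) f) \<le> M * dist (measure lborel (B s)) (measure lborel (B t))"
    using nested[OF st] le[OF st] le[OF st(2,1)] by (auto simp: dist_commute)
  also have "\<dots> \<le> M * (L * dist s t)"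
    using lipschitz_onD[OF measure st] assms(1) by (rule mult_left_mono)
  finally show "dist (integral (B s) f) (integral (B t) f) \<le> M * L * dist s t"
    by (simp add: mult.assoc)
qed

lemma lipschitz_on_power2_unit_interval: "2-lipschitz_on {0..1} (\<lambda>t::real. t\<^sup>2)"
proof (rule lipschitz_onI)
  fix s t :: real assume "s \<in> {0..1}" "t \<in> {0..1}"
  then have "\<bar>s + t\<bar> \<le> 2" by auto
  then have "\<bar>s - t\<bar> * \<bar>s + t\<bar> \<le> \<bar>s - t\<bar> * 2" by (rule mult_left_mono) simp
  then show "dist (s\<^sup>2) (t\<^sup>2) \<le> 2 * dist s t"
    by (simp add: dist_real_def power2_eq_square abs_mult[symmetric] algebra_simps)
qed simp

definition corner_square :: "real \<Rightarrow> (real^2) set" where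
  "corner_square t = axis_square 0 0 t"

(* For a, b in {0, 1}, not both 0: the square of side 1 - t in the corner (a, b) of the unit square. *)
definition far_square :: "real \<Rightarrow> real \<Rightarrow> real \<Rightarrow> (real^2) set" where
  "far_square a b t = axis_square (a * t) (b * t) (1 - t)"

lemma corner_square_subset: "t \<le> 1 \<Longrightarrow> corner_square t \<subseteq> unit_square"
  unfolding corner_square_def by (rule axis_square_subset) auto

lemma corner_square_mono: "s \<le> t \<Longrightarrow> corner_square s \<subseteq> corner_square t"
  unfolding corner_square_def by (rule axis_square_subset) auto

lemma far_square_subset:
  assumes "0 \<le> a" "a \<le> 1" "0 \<le> b" "b \<le> 1" "0 \<le> t"
  shows "far_square a b t \<subseteq> unit_square"
  unfolding far_square_def
  by (rule axis_square_subset) (use assms in \<open>simp_all add: mult_left_le_one_le\<close>)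

lemma far_square_antimono:
  assumes "0 \<le> a" "a \<le> 1" "0 \<le> b" "b \<le> 1" "s \<le> t"
  shows "far_square a b t \<subseteq> far_square a b s"
  unfolding far_square_def
proof (rule axis_square_subset)
  show "a * s \<le> a * t" "b * s \<le> b * t"
    using assms by (simp_all add: mult_left_mono)
  show "a * t + (1 - t) \<le> a * s + (1 - s)" "b * t + (1 - t) \<le> b * s + (1 - s)"
    using mult_left_mono[of s t "1 - a"] mult_left_mono[of s t "1 - b"] assms
    by (simp_all add: algebra_simps)
qed

lemma interior_corner_far_square_disjoint:
  "a = 1 \<or> b = 1 \<Longrightarrow> interior (corner_square t) \<inter> interior (far_square a b t) = {}"
  unfolding corner_square_def far_square_def by (auto simp: mem_interior_axis_square)

lemma unit_square_subset_corner_far_squares: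
  assumes "t \<le> 1/2"
  shows "unit_square \<subseteq> corner_square t \<union> far_square 1 0 t \<union> far_square 1 1 t \<union> far_square 0 1 t"
  using assms
  by (auto simp: corner_square_def far_square_def mem_axis_square not_le)

lemma integrable_on_axis_subsquare:
  fixes f :: "real^2 \<Rightarrow> real"
  assumes "f integrable_on unit_square" "axis_square x y s \<subseteq> unit_square"
  shows "f integrable_on axis_square x y s"
  using assms unfolding axis_square_def[of x y s] by (rule integrable_on_subcbox)

lemma lipschitz_on_integral_nested_subsquares:
  fixes f :: "real^2 \<Rightarrow> real" and F :: "real \<Rightarrow> (real^2) set"
  assumes f: "f integrable_on unit_square" and bounds: "\<And>x. x \<in> unit_square \<Longrightarrow> 0 \<le> f x \<and> f x \<le> M"
    and measure: "L-lipschitz_on T (\<lambda>t. measure lborel (F t))"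
    and squares: "\<And>t. t \<in> T \<Longrightarrow> (\<exists>x y s. F t = axis_square x y s) \<and> F t \<subseteq> unit_square"
    and nested: "\<And>s t. s \<in> T \<Longrightarrow> t \<in> T \<Longrightarrow> F s \<subseteq> F t \<or> F t \<subseteq> F s"
  shows "(M * L)-lipschitz_on T (\<lambda>t. integral (F t) f)"
proof (rule lipschitz_on_integral_nested_cboxes[OF _ measure _ _ _ nested])
  show "0 \<le> M"
    using bounds[of 0] by (simp add: mem_axis_square)
  fix t assume "t \<in> T"
  then obtain x y s where F: "F t = axis_square x y s" and sub: "F t \<subseteq> unit_square"
    using squares by blast
  then show "\<exists>a b. F t = cbox a b"
    unfolding axis_square_def by blast
  show "f integrable_on F t"
    using integrable_on_axis_subsquare[OF f] F sub by simp
  show "0 \<le> f p \<and> f p \<le> M" if "p \<in> F t" for p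
    using that sub bounds by blast
qed

lemma continuous_on_integral_corner_square:
  fixes f :: "real^2 \<Rightarrow> real"
  assumes f: "f integrable_on unit_square" and bounds: "\<And>x. x \<in> unit_square \<Longrightarrow> 0 \<le> f x \<and> f x \<le> M"
  shows "continuous_on {0..1} (\<lambda>t. integral (corner_square t) f)"
proof (rule lipschitz_on_continuous_on[OF lipschitz_on_integral_nested_subsquares[OF f bounds]])
  show "2-lipschitz_on {0..1} (\<lambda>t. measure lborel (corner_square t))"
    by (rule lipschitz_on_transform[OF lipschitz_on_power2_unit_interval])
      (simp add: corner_square_def measure_axis_square)
  show "(\<exists>x y s. corner_square t = axis_square x y s) \<and> corner_square t \<subseteq> unit_square"
    if "t \<in> {0..1}" for t
    using that corner_square_subset by (auto simp: corner_square_def)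
  show "corner_square s \<subseteq> corner_square t \<or> corner_square t \<subseteq> corner_square s" for s t
    using corner_square_mono by (metis linear)
qed

lemma continuous_on_integral_far_square:
  fixes f :: "real^2 \<Rightarrow> real"
  assumes f: "f integrable_on unit_square" and bounds: "\<And>x. x \<in> unit_square \<Longrightarrow> 0 \<le> f x \<and> f x \<le> M"
    and ab: "0 \<le> a" "a \<le> 1" "0 \<le> b" "b \<le> 1"
  shows "continuous_on {0..1} (\<lambda>t. integral (far_square a b t) f)"
proof (rule lipschitz_on_continuous_on[OF lipschitz_on_integral_nested_subsquares[OF f bounds]])
  show "2-lipschitz_on {0..1} (\<lambda>t. measure lborel (far_square a b t))"
  proof (rule lipschitz_onI)
    fix s t :: real assume "s \<in> {0..1}" "t \<in> {0..1}"
    then have "dist ((1 - s)\<^sup>2) ((1 - t)\<^sup>2) \<le> 2 * dist (1 - s) (1 - t)"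
      by (intro lipschitz_onD[OF lipschitz_on_power2_unit_interval]) auto
    with \<open>s \<in> {0..1}\<close> \<open>t \<in> {0..1}\<close>
    show "dist (measure lborel (far_square a b s)) (measure lborel (far_square a b t)) \<le> 2 * dist s t"
      by (simp add: far_square_def measure_axis_square dist_real_def abs_minus_commute)
  qed simp
  show "(\<exists>x y s. far_square a b t = axis_square x y s) \<and> far_square a b t \<subseteq> unit_square"
    if "t \<in> {0..1}" for t
    using that far_square_subset[OF ab] by (auto simp: far_square_def)
  show "far_square a b s \<subseteq> far_square a b t \<or> far_square a b t \<subseteq> far_square a b s" for s t
    using far_square_antimono[OF ab] by (metis linear)
qed

lemma integral_le_sum_cover:
  fixes f :: "'a::euclidean_space \<Rightarrow> real"
  assumes "finite I" and cover: "S \<subseteq> (\<Union>i\<in>I. T i)" and sub: "\<And>i. i \<in> I \<Longrightarrow> T i \<subseteq> S"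
    and f: "f integrable_on S" "\<And>i. i \<in> I \<Longrightarrow> f integrable_on T i"
    and nonneg: "\<And>x. x \<in> S \<Longrightarrow> 0 \<le> f x"
  shows "integral S f \<le> (\<Sum>i\<in>I. integral (T i) f)"
proof -
  let ?r = "\<lambda>A x. if x \<in> A then f x else 0"
  have r: "?r A integrable_on UNIV" if "f integrable_on A" for A
    using that integrable_restrict_UNIV by blast
  have rT: "?r (T i) integrable_on UNIV" if "i \<in> I" for i
    using r f(2) that by blast
  have "integral S f = integral UNIV (?r S)"
    by (simp add: integral_restrict_UNIV)
  also have "\<dots> \<le> integral UNIV (\<lambda>x. \<Sum>i\<in>I. ?r (T i) x)"
  proof (rule integral_le)
    show "?r S integrable_on UNIV"
      using r f(1) .
    show "(\<lambda>x. \<Sum>i\<in>I. ?r (T i) x) integrable_on UNIV"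
      using rT by (intro integrable_sum \<open>finite I\<close>)
    fix x
    show "?r S x \<le> (\<Sum>i\<in>I. ?r (T i) x)"
    proof (cases "x \<in> S")
      case True
      then obtain j where j: "j \<in> I" "x \<in> T j"
        using cover by blast
      then have "?r S x = ?r (T j) x"
        using True by simp
      also have "\<dots> \<le> (\<Sum>i\<in>I. ?r (T i) x)"
        by (rule member_le_sum) (use j \<open>finite I\<close> sub nonneg in auto)
      finally show ?thesis .
    next
      case False
      then have "x \<notin> T i" if "i \<in> I" for i
        using sub that by blast
      then show ?thesis
        using False by simp
    qed
  qed
  also have "\<dots> = (\<Sum>i\<in>I. integral (T i) f)"
    using rT by (simp add: integral_sum[OF \<open>finite I\<close>] integral_restrict_UNIV)
  finally show ?thesis .
qed

lemma integral_unit_square_le_corner_far: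
  fixes f :: "real^2 \<Rightarrow> real"
  assumes f: "f integrable_on unit_square" and nonneg: "\<And>x. x \<in> unit_square \<Longrightarrow> 0 \<le> f x"
    and t: "0 \<le> t" "t \<le> 1/2"
  shows "integral unit_square f \<le> integral (corner_square t) f + integral (far_square 1 0 t) f
           + integral (far_square 1 1 t) f + integral (far_square 0 1 t) f"
proof -
  let ?T = "(!) [corner_square t, far_square 1 0 t, far_square 1 1 t, far_square 0 1 t]"
  have "corner_square t \<subseteq> unit_square" "far_square 1 0 t \<subseteq> unit_square"
    "far_square 1 1 t \<subseteq> unit_square" "far_square 0 1 t \<subseteq> unit_square"
    using t corner_square_subset far_square_subset by auto
  then have sub: "?T i \<subseteq> unit_square" if "i \<in> {0, 1, 2, 3}" for i
    using that by auto
  have "integral unit_square f \<le> (\<Sum>i\<in>{0, 1, 2, 3}. integral (?T i) f)"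
  proof (rule integral_le_sum_cover[OF _ _ sub f _ nonneg])
    show "unit_square \<subseteq> (\<Union>i\<in>{0, 1, 2, 3}. ?T i)"
      using unit_square_subset_corner_far_squares[OF t(2)] by (simp add: Un_assoc)
    show "f integrable_on ?T i" if "i \<in> {0, 1, 2, 3}" for i
      using integrable_on_axis_subsquare[OF f] sub[OF that] that
      by (auto simp: corner_square_def far_square_def)
  qed simp_all
  then show ?thesis
    by (simp add: add.assoc)
qed

definition corner_advantage :: "(real^2 \<Rightarrow> real) \<Rightarrow> real \<Rightarrow> real" where
  "corner_advantage f t = integral (corner_square t) f -
     max (integral (far_square 1 0 t) f) (max (integral (far_square 1 1 t) f) (integral (far_square 0 1 t) f))"

lemma continuous_on_corner_advantage:
  fixes f :: "real^2 \<Rightarrow> real"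
  assumes "f integrable_on unit_square" and "\<And>x. x \<in> unit_square \<Longrightarrow> 0 \<le> f x \<and> f x \<le> M"
  shows "continuous_on {0..1} (corner_advantage f)"
  unfolding corner_advantage_def
  using continuous_on_integral_corner_square[OF assms] continuous_on_integral_far_square[OF assms]
  by (intro continuous_intros) auto

lemma corner_advantage_0_neg:
  assumes "0 < integral unit_square f"
  shows "corner_advantage f 0 < 0"
proof -
  have "integral (corner_square 0) f = 0"
    using measure_axis_square[of 0 0 0]
    by (simp add: corner_square_def axis_square_def integral_null)
  then show ?thesis
    using assms by (simp add: corner_advantage_def far_square_def)
qed

lemma corner_advantage_half_nonneg:
  assumes "\<And>x y. x \<in> {0, 1/2} \<Longrightarrow> y \<in> {0, 1/2} \<Longrightarrow>
      integral (axis_square x y (1/2)) f \<le> integral (axis_square 0 0 (1/2)) f"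
  shows "0 \<le> corner_advantage f (1/2)"
  using assms[of "1/2" 0] assms[of "1/2" "1/2"] assms[of 0 "1/2"]
  by (simp add: corner_advantage_def corner_square_def far_square_def)

definition subsquare :: "(real^2) set \<Rightarrow> bool" where
  "subsquare P \<longleftrightarrow> (\<exists>x y s. 0 < s \<and> P = axis_square x y s \<and> P \<subseteq> unit_square)"

definition proportional_envy_free_split ::
    "(real^2 \<Rightarrow> real) \<Rightarrow> (real^2 \<Rightarrow> real) \<Rightarrow> (real^2) set \<Rightarrow> (real^2) set \<Rightarrow> bool" where
  "proportional_envy_free_split f g P Q \<longleftrightarrow>
     subsquare P \<and> subsquare Q \<and> interior P \<inter> interior Q = {} \<and>
     integral Q f \<le> integral P f \<and> integral P g \<le> integral Q g \<and>
     integral unit_square f \<le> 4 * integral P f \<and> integral unit_square g \<le> 4 * integral Q g"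

lemma subsquare_corner_square: "0 < t \<Longrightarrow> t \<le> 1 \<Longrightarrow> subsquare (corner_square t)"
  unfolding subsquare_def using corner_square_subset by (auto simp: corner_square_def)

lemma subsquare_far_square:
  "0 \<le> a \<Longrightarrow> a \<le> 1 \<Longrightarrow> 0 \<le> b \<Longrightarrow> b \<le> 1 \<Longrightarrow> 0 \<le> t \<Longrightarrow> t < 1 \<Longrightarrow> subsquare (far_square a b t)"
  unfolding subsquare_def using far_square_subset[of a b t]
  by (intro exI[of _ "a * t"] exI[of _ "b * t"] exI[of _ "1 - t"]) (simp add: far_square_def)

lemma proportional_envy_free_split_swap:
  "proportional_envy_free_split f g P Q \<Longrightarrow> proportional_envy_free_split g f Q P"
  unfolding proportional_envy_free_split_def by auto

lemma proportional_envy_free_split_at_corner: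
  fixes f g :: "real^2 \<Rightarrow> real"
  assumes f: "f integrable_on unit_square" "\<And>x. x \<in> unit_square \<Longrightarrow> 0 \<le> f x"
    and g: "g integrable_on unit_square" "\<And>x. x \<in> unit_square \<Longrightarrow> 0 \<le> g x"
    and t: "0 < t" "t \<le> 1/2"
    and advantages: "0 \<le> corner_advantage f t" "corner_advantage g t \<le> 0"
  shows "\<exists>Q. proportional_envy_free_split f g (corner_square t) Q"
proof -
  let ?far = "{far_square 1 0 t, far_square 1 1 t, far_square 0 1 t}"
  obtain Q where Q: "Q \<in> ?far" and "integral Q g =
      max (integral (far_square 1 0 t) g) (max (integral (far_square 1 1 t) g) (integral (far_square 0 1 t) g))"
    by (simp add: max_def) metis
  then have Q_max: "integral R g \<le> integral Q g" if "R \<in> insert (corner_square t) ?far" for R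
    using that advantages(2) by (auto simp: corner_advantage_def)
  have corner_max: "integral R f \<le> integral (corner_square t) f" if "R \<in> ?far" for R
    using that advantages(1) by (auto simp: corner_advantage_def)
  have "subsquare (corner_square t)"
    using t by (intro subsquare_corner_square) auto
  moreover have "subsquare Q"
    using Q t by (auto intro: subsquare_far_square)
  moreover have "interior (corner_square t) \<inter> interior Q = {}"
    using Q interior_corner_far_square_disjoint by auto
  moreover have "integral unit_square f \<le> 4 * integral (corner_square t) f"
    using integral_unit_square_le_corner_far[OF f less_imp_le[OF t(1)] t(2)]
      corner_max[of "far_square 1 0 t"] corner_max[of "far_square 1 1 t"] corner_max[of "far_square 0 1 t"]
    by simp
  moreover have "integral unit_square g \<le> 4 * integral Q g"
    using integral_unit_square_le_corner_far[OF g less_imp_le[OF t(1)] t(2)] Q_max[of "corner_square t"]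
      Q_max[of "far_square 1 0 t"] Q_max[of "far_square 1 1 t"] Q_max[of "far_square 0 1 t"]
    by simp
  moreover have "integral Q f \<le> integral (corner_square t) f" "integral (corner_square t) g \<le> integral Q g"
    using Q corner_max Q_max by auto
  ultimately show ?thesis
    unfolding proportional_envy_free_split_def by blast
qed

theorem proportional_envy_free_split_exists:
  fixes f g :: "real^2 \<Rightarrow> real"
  assumes f: "f integrable_on unit_square" "\<And>x. x \<in> unit_square \<Longrightarrow> 0 \<le> f x \<and> f x \<le> M"
    and g: "g integrable_on unit_square" "\<And>x. x \<in> unit_square \<Longrightarrow> 0 \<le> g x \<and> g x \<le> N"
    and positive: "0 < integral unit_square f" "0 < integral unit_square g"
    and best_quarter: "\<And>x y. x \<in> {0, 1/2} \<Longrightarrow> y \<in> {0, 1/2} \<Longrightarrow>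
      integral (axis_square x y (1/2)) f \<le> integral (axis_square 0 0 (1/2)) f"
  shows "\<exists>P Q. proportional_envy_free_split f g P Q"
proof -
  define k where "k t = max (corner_advantage f t) (corner_advantage g t)" for t
  have "continuous_on {0..1/2} k"
    unfolding k_def
    using continuous_on_corner_advantage[OF f] continuous_on_corner_advantage[OF g]
    by (intro continuous_on_max) (auto elim: continuous_on_subset)
  moreover have k0: "k 0 < 0"
    using corner_advantage_0_neg positive by (simp add: k_def)
  moreover have "0 \<le> k (1/2)"
    using corner_advantage_half_nonneg[OF best_quarter] by (simp add: k_def)
  ultimately obtain t where t: "0 \<le> t" "t \<le> 1/2" "k t = 0"
    using IVT'[of k 0 0 "1/2"] by auto
  with k0 have "0 < t"
    by (cases "t = 0") auto
  have nonneg: "\<And>x. x \<in> unit_square \<Longrightarrow> 0 \<le> f x" "\<And>x. x \<in> unit_square \<Longrightarrow> 0 \<le> g x"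
    using f(2) g(2) by auto
  consider "corner_advantage f t = 0" "corner_advantage g t \<le> 0"
    | "corner_advantage g t = 0" "corner_advantage f t \<le> 0"
    using t(3) by (auto simp: k_def max_def split: if_splits)
  then show ?thesis
  proof cases
    case 1
    then show ?thesis
      using proportional_envy_free_split_at_corner[OF f(1) nonneg(1) g(1) nonneg(2) \<open>0 < t\<close> t(2)] by auto
  next
    case 2
    then show ?thesis
      using proportional_envy_free_split_at_corner[OF g(1) nonneg(2) f(1) nonneg(1) \<open>0 < t\<close> t(2)]
        proportional_envy_free_split_swap by fastforce
  qed
qed

section \<open>Similarity charts\<close>

definition chart :: "real^2 \<Rightarrow> real^2 \<Rightarrow> real^2 \<Rightarrow> real \<Rightarrow> real^2 \<Rightarrow> real^2" where
  "chart c u w r p = c + (p$1 * r) *\<^sub>R u + (p$2 * r) *\<^sub>R w"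

lemma continuous_chart: "continuous (at p) (chart c u w r)"
  unfolding chart_def by (intro continuous_intros)

lemma chart_image_axis_square:
  assumes "0 < s"
  shows "chart c u w r ` axis_square x y s =
    {chart c u w r (vector [x, y]) + (a * (s * r)) *\<^sub>R u + (b * (s * r)) *\<^sub>R w | a b. a \<in> {0..1} \<and> b \<in> {0..1}}"
proof (intro set_eqI iffI)
  fix q assume "q \<in> chart c u w r ` axis_square x y s"
  then obtain p where p: "p \<in> axis_square x y s" "q = chart c u w r p"
    by auto
  define a where "a = (p$1 - x) / s"
  define b where "b = (p$2 - y) / s"
  have "a \<in> {0..1}" "b \<in> {0..1}"
    using p(1) assms by (auto simp: mem_axis_square a_def b_def field_simps)
  moreover have "p$1 = x + a * s" "p$2 = y + b * s"
    using assms by (auto simp: a_def b_def)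
  then have "q = chart c u w r (vector [x, y]) + (a * (s * r)) *\<^sub>R u + (b * (s * r)) *\<^sub>R w"
    using p(2) by (simp add: chart_def algebra_simps)
  ultimately show "q \<in> {chart c u w r (vector [x, y]) + (a * (s * r)) *\<^sub>R u + (b * (s * r)) *\<^sub>R w | a b.
      a \<in> {0..1} \<and> b \<in> {0..1}}"
    by blast
next
  fix q assume "q \<in> {chart c u w r (vector [x, y]) + (a * (s * r)) *\<^sub>R u + (b * (s * r)) *\<^sub>R w | a b.
      a \<in> {0..1} \<and> b \<in> {0..1}}"
  then obtain a b where ab: "a \<in> {0..1}" "b \<in> {0..1}"
    and q: "q = chart c u w r (vector [x, y]) + (a * (s * r)) *\<^sub>R u + (b * (s * r)) *\<^sub>R w"
    by blast
  have "vector [x + a * s, y + b * s] \<in> axis_square x y s"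
    using ab assms by (auto simp: mem_axis_square mult_le_cancel_right1)
  moreover have "q = chart c u w r (vector [x + a * s, y + b * s])"
    using q by (simp add: chart_def algebra_simps)
  ultimately show "q \<in> chart c u w r ` axis_square x y s"
    by blast
qed

lemma chart_eq_translate: "chart c u w r p = c + chart 0 u w r p"
  by (simp add: chart_def add.assoc)

lemma linear_chart_0: "linear (chart 0 u w r)"
  by (rule linearI) (simp_all add: chart_def algebra_simps)

definition reflect :: "real \<Rightarrow> real \<Rightarrow> real^2 \<Rightarrow> real^2" where
  "reflect a b p = vector [a + (1 - 2 * a) * p$1, b + (1 - 2 * b) * p$2]"

lemma chart_reflect:
  "chart c u w r (reflect a b p) = chart (chart c u w r (vector [a, b])) ((1 - 2 * a) *\<^sub>R u) ((1 - 2 * b) *\<^sub>R w) r p"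
  by (simp add: chart_def reflect_def algebra_simps)

lemma reflect_image_axis_square:
  assumes "a \<in> {0, 1}" "b \<in> {0, 1}"
  shows "reflect a b ` axis_square x y s =
    axis_square (a * (1 - s) + (1 - 2 * a) * x) (b * (1 - s) + (1 - 2 * b) * y) s"
proof -
  have "reflect a b (reflect a b p) = p" for p
    using assms by (auto simp: reflect_def vec_eq_iff forall_2)
  then have "reflect a b ` S = {p. reflect a b p \<in> S}" for S
    by (auto simp: image_iff) metis
  then show ?thesis
    using assms by (auto simp: mem_axis_square reflect_def)
qed

locale square_frame =
  fixes u w :: "real^2" and r :: real
  assumes r_pos: "0 < r" and norm_u: "norm u = 1" and norm_w: "norm w = 1" and orthogonal: "u \<bullet> w = 0"
begin

lemma is_square_chart_image:
  assumes "0 < s"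
  shows "is_square (chart c u w r ` axis_square x y s)"
  unfolding is_square_def chart_image_axis_square[OF assms]
  using assms r_pos norm_u norm_w orthogonal
  by (intro exI[of _ "chart c u w r (vector [x, y])"] exI[of _ u] exI[of _ w] exI[of _ "s * r"]) simp

lemma inner_chart_0: "chart 0 u w r p \<bullet> u = p$1 * r" "chart 0 u w r p \<bullet> w = p$2 * r"
proof -
  have "u \<bullet> u = 1" "w \<bullet> w = 1" "w \<bullet> u = 0"
    using norm_u norm_w orthogonal by (simp_all add: norm_eq_1 inner_commute)
  then show "chart 0 u w r p \<bullet> u = p$1 * r" "chart 0 u w r p \<bullet> w = p$2 * r"
    by (simp_all add: chart_def inner_add_left orthogonal)
qed

lemma inj_chart: "inj (chart c u w r)"
proof (rule injI)
  fix p q assume "chart c u w r p = chart c u w r q"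
  then have "chart 0 u w r p = chart 0 u w r q"
    by (simp add: chart_eq_translate[of c])
  then have "p$1 * r = q$1 * r" "p$2 * r = q$2 * r"
    using inner_chart_0[of p] inner_chart_0[of q] by auto
  then show "p = q"
    using r_pos by (simp add: vec_eq_iff forall_2)
qed

lemma interior_chart_image_disjoint:
  assumes "interior P \<inter> interior Q = {}"
  shows "interior (chart c u w r ` P) \<inter> interior (chart c u w r ` Q) = {}"
proof -
  have "interior (chart c u w r ` P) \<inter> interior (chart c u w r ` Q) \<subseteq>
      chart c u w r ` interior P \<inter> chart c u w r ` interior Q"
    using interior_image_subset[OF inj_chart continuous_chart] by blast
  also have "\<dots> = chart c u w r ` (interior P \<inter> interior Q)"
    by (simp add: image_Int[OF inj_chart])
  finally show ?thesis
    by (simp add: assms)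
qed

lemma abs_det_chart_0: "\<bar>det (matrix (chart 0 u w r))\<bar> = r\<^sup>2"
proof -
  have "(u$1)\<^sup>2 + (u$2)\<^sup>2 = 1" "(w$1)\<^sup>2 + (w$2)\<^sup>2 = 1" "u$1 * w$1 + u$2 * w$2 = 0"
    using norm_u norm_w orthogonal
    by (simp_all add: norm_eq_1 inner_vec_def UNIV_2 power2_eq_square)
  moreover have "(u$1 * w$2 - w$1 * u$2)\<^sup>2 =
      ((u$1)\<^sup>2 + (u$2)\<^sup>2) * ((w$1)\<^sup>2 + (w$2)\<^sup>2) - (u$1 * w$1 + u$2 * w$2)\<^sup>2"
    by algebra
  ultimately have "\<bar>u$1 * w$2 - w$1 * u$2\<bar> = 1"
    by (simp add: abs_square_eq_1[symmetric])
  moreover have "det (matrix (chart 0 u w r)) = r\<^sup>2 * (u$1 * w$2 - w$1 * u$2)"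
    by (simp add: det_2 matrix_def chart_def axis_def power2_eq_square algebra_simps)
  ultimately show ?thesis
    using r_pos by (simp add: abs_mult)
qed

lemma has_integral_chart_image:
  fixes v :: "real^2 \<Rightarrow> real"
  assumes nonneg: "\<And>y. y \<in> chart c u w r ` S \<Longrightarrow> 0 \<le> v y"
  shows "((\<lambda>x. r\<^sup>2 * v (chart c u w r x)) has_integral b) S \<longleftrightarrow> (v has_integral b) (chart c u w r ` S)"
proof -
  define coords where "coords z = (vector [(z \<bullet> u) / r, (z \<bullet> w) / r] :: real^2)" for z
  have "linear coords"
    by (rule linearI) (simp_all add: coords_def vec_eq_iff forall_2 vector_2 inner_add_left add_divide_distrib)
  then have "(\<lambda>y. coords (y - c)) = (\<lambda>y. coords y - coords c)"
    by (simp add: linear_diff)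
  with \<open>linear coords\<close> have coords_derivative: "((\<lambda>y. coords (y - c)) has_derivative coords) (at y within T)" for y T
    using has_derivative_diff[OF linear_imp_has_derivative has_derivative_const] by fastforce
  have coords_chart: "coords (chart 0 u w r p) = p" for p
    using r_pos by (simp add: coords_def inner_chart_0 vec_eq_iff forall_2)
  have chart_derivative: "(chart c u w r has_derivative chart 0 u w r) (at x within S)" for x
    using has_derivative_add[OF has_derivative_const linear_imp_has_derivative[OF linear_chart_0]]
    unfolding chart_eq_translate[of c, abs_def] by fastforce
  have "((\<lambda>x. \<bar>det (matrix (chart 0 u w r))\<bar> * v (chart c u w r x)) has_integral b) S \<longleftrightarrow>
      (v has_integral b) (chart c u w r ` S)"
    by (rule cov_invertible_nonneg_eq[OF chart_derivative coords_derivative nonneg])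
      (auto simp: chart_eq_translate[of c] coords_chart o_def fun_eq_iff)
  then show ?thesis
    by (simp add: abs_det_chart_0)
qed

lemma val_chart_image:
  fixes v :: "real^2 \<Rightarrow> real"
  assumes "(\<lambda>x. v (chart c u w r x)) integrable_on S" "\<And>y. y \<in> chart c u w r ` S \<Longrightarrow> 0 \<le> v y"
  shows "val v (chart c u w r ` S) = r\<^sup>2 * integral S (\<lambda>x. v (chart c u w r x))"
proof -
  have "((\<lambda>x. r\<^sup>2 * v (chart c u w r x)) has_integral r\<^sup>2 * integral S (\<lambda>x. v (chart c u w r x))) S"
    by (rule has_integral_mult_right[OF integrable_integral[OF assms(1)]])
  then have "(v has_integral r\<^sup>2 * integral S (\<lambda>x. v (chart c u w r x))) (chart c u w r ` S)"
    using has_integral_chart_image[where c = c and S = S and v = v, OF assms(2)] by blast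
  then show ?thesis
    unfolding val_def by (rule integral_unique)
qed

lemma integrable_on_chart_pullback:
  fixes v :: "real^2 \<Rightarrow> real"
  assumes "v integrable_on chart c u w r ` S" "\<And>y. y \<in> chart c u w r ` S \<Longrightarrow> 0 \<le> v y"
  shows "(\<lambda>x. v (chart c u w r x)) integrable_on S"
proof -
  obtain I where "(v has_integral I) (chart c u w r ` S)"
    using assms(1) by (auto simp: integrable_on_def)
  then have "(\<lambda>x. r\<^sup>2 * v (chart c u w r x)) integrable_on S"
    using has_integral_chart_image[where c = c and S = S and v = v, OF assms(2)] by (auto simp: integrable_on_def)
  then show ?thesis
    using r_pos by (simp add: integrable_on_cmult_iff)
qed

lemma square_frame_reflect:
  assumes "a \<in> {0, 1}" "b \<in> {0, 1}"
  shows "square_frame ((1 - 2 * a) *\<^sub>R u) ((1 - 2 * b) *\<^sub>R w) r"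
  using assms r_pos norm_u norm_w orthogonal by unfold_locales auto

end

section \<open>Transfer to an arbitrary square\<close>

lemma subsquare_unit_square: "subsquare unit_square"
  unfolding subsquare_def by (intro exI[of _ 0] exI[of _ 1]) simp

lemma subsquare_quarter: "x \<in> {0, 1/2} \<Longrightarrow> y \<in> {0, 1/2} \<Longrightarrow> subsquare (axis_square x y (1/2))"
  unfolding subsquare_def
  by (intro exI[of _ x] exI[of _ y] exI[of _ "1/2"] conjI axis_square_subset) auto

lemma is_squareE:
  assumes "is_square C"
  obtains c u w r where "square_frame u w r" "C = chart c u w r ` unit_square"
proof -
  obtain c u w r where "0 < r" "norm u = 1" "norm w = 1" "u \<bullet> w = 0"
    and C: "C = {c + (a * r) *\<^sub>R u + (b * r) *\<^sub>R w | a b. a \<in> {0..1} \<and> b \<in> {0..1}}"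
    using assms unfolding is_square_def by blast
  then have "square_frame u w r"
    by unfold_locales
  moreover have "C = chart c u w r ` unit_square"
    using chart_image_axis_square[of 1 c u w r 0 0] by (simp add: C chart_def)
  ultimately show thesis
    using that by blast
qed

lemma compact_square:
  assumes "is_square C"
  shows "compact C"
proof -
  obtain c u w r where "C = chart c u w r ` unit_square"
    using is_squareE[OF assms] .
  moreover have "continuous_on unit_square (chart c u w r)"
    using continuous_at_imp_continuous_on continuous_chart by blast
  ultimately show ?thesis
    by (simp add: compact_continuous_image axis_square_def)
qed

lemma val_S_square:
  assumes v: "value_density v C" and X: "is_square X" "X \<subseteq> C"
  shows "val_S v X = val v X"
proof -
  have absolutely_integrable: "v absolutely_integrable_on C"
    using v by (auto simp: value_density_def intro!: nonnegative_absolutely_integrable_1)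
  have integrable: "v integrable_on s" if "is_square s" "s \<subseteq> C" for s
  proof -
    have "s \<in> sets lebesgue"
      using compact_square[OF that(1)] lmeasurable_compact fmeasurableD by blast
    then show ?thesis
      using set_integrable_subset[OF absolutely_integrable _ that(2)] absolutely_integrable_on_def by blast
  qed
  show ?thesis
    unfolding val_S_def
  proof (rule cSup_eq_maximum)
    show "val v X \<in> {val v s |s. is_square s \<and> s \<subseteq> X}"
      using X by blast
  next
    fix x assume "x \<in> {val v s |s. is_square s \<and> s \<subseteq> X}"
    then obtain s where s: "x = val v s" "is_square s" "s \<subseteq> X"
      by blast
    show "x \<le> val v X"
      unfolding s(1) val_def
      by (rule integral_subset_le) (use s X integrable v in \<open>auto simp: value_density_def\<close>)
  qed
qed

context square_frame
begin

lemma val_chart_image_subsquare: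
  assumes v: "value_density v (chart c u w r ` unit_square)" and P: "subsquare P"
  shows "val v (chart c u w r ` P) = r\<^sup>2 * integral P (\<lambda>x. v (chart c u w r x))"
proof (rule val_chart_image)
  obtain x y s where P_eq: "P = axis_square x y s" and "P \<subseteq> unit_square"
    using P by (auto simp: subsquare_def)
  moreover have "(\<lambda>x. v (chart c u w r x)) integrable_on unit_square"
    using v by (intro integrable_on_chart_pullback) (auto simp: value_density_def)
  ultimately show "(\<lambda>x. v (chart c u w r x)) integrable_on P"
    using integrable_on_axis_subsquare by blast
  show "0 \<le> v y" if "y \<in> chart c u w r ` P" for y
    using that v \<open>P \<subseteq> unit_square\<close> by (auto simp: value_density_def)
qed

lemma value_density_pullback:
  assumes v: "value_density v (chart c u w r ` unit_square)"
  obtains M where "(\<lambda>x. v (chart c u w r x)) integrable_on unit_square"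
    "\<And>x. x \<in> unit_square \<Longrightarrow> 0 \<le> v (chart c u w r x) \<and> v (chart c u w r x) \<le> M"
    "0 < integral unit_square (\<lambda>x. v (chart c u w r x))"
proof -
  have "bounded (v ` chart c u w r ` unit_square)"
    using v by (simp add: value_density_def)
  then obtain M where "\<And>x. x \<in> unit_square \<Longrightarrow> \<bar>v (chart c u w r x)\<bar> \<le> M"
    by (auto simp: bounded_real)
  then have "0 \<le> v (chart c u w r x) \<and> v (chart c u w r x) \<le> M" if "x \<in> unit_square" for x
    using that v by (fastforce simp: value_density_def)
  moreover have "(\<lambda>x. v (chart c u w r x)) integrable_on unit_square"
    using v by (intro integrable_on_chart_pullback) (auto simp: value_density_def)
  moreover have "0 < val v (chart c u w r ` unit_square)"
    using v by (simp add: value_density_def val_def)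
  then have "0 < integral unit_square (\<lambda>x. v (chart c u w r x))"
    using r_pos by (simp add: val_chart_image_subsquare[OF v subsquare_unit_square] zero_less_mult_iff)
  ultimately show thesis
    using that by blast
qed

lemma proportional_envy_free_split_pullback_exists:
  assumes v1: "value_density v1 (chart c u w r ` unit_square)"
    and v2: "value_density v2 (chart c u w r ` unit_square)"
    and best_quarter: "\<And>x y. x \<in> {0, 1/2} \<Longrightarrow> y \<in> {0, 1/2} \<Longrightarrow>
      val v1 (chart c u w r ` axis_square x y (1/2)) \<le> val v1 (chart c u w r ` axis_square 0 0 (1/2))"
  shows "\<exists>P Q. proportional_envy_free_split (\<lambda>x. v1 (chart c u w r x)) (\<lambda>x. v2 (chart c u w r x)) P Q"
proof -
  obtain M1 where f1: "(\<lambda>x. v1 (chart c u w r x)) integrable_on unit_square"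
    "\<And>x. x \<in> unit_square \<Longrightarrow> 0 \<le> v1 (chart c u w r x) \<and> v1 (chart c u w r x) \<le> M1"
    "0 < integral unit_square (\<lambda>x. v1 (chart c u w r x))"
    using value_density_pullback[OF v1] by blast
  obtain M2 where f2: "(\<lambda>x. v2 (chart c u w r x)) integrable_on unit_square"
    "\<And>x. x \<in> unit_square \<Longrightarrow> 0 \<le> v2 (chart c u w r x) \<and> v2 (chart c u w r x) \<le> M2"
    "0 < integral unit_square (\<lambda>x. v2 (chart c u w r x))"
    using value_density_pullback[OF v2] by blast
  have "integral (axis_square x y (1/2)) (\<lambda>x. v1 (chart c u w r x)) \<le>
      integral (axis_square 0 0 (1/2)) (\<lambda>x. v1 (chart c u w r x))"
    if "x \<in> {0, 1/2}" "y \<in> {0, 1/2}" for x y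
    using best_quarter[OF that] r_pos
      val_chart_image_subsquare[OF v1 subsquare_quarter[OF that]]
      val_chart_image_subsquare[OF v1 subsquare_quarter[of 0 0]]
    by simp
  then show ?thesis
    using proportional_envy_free_split_exists[OF f1(1,2) f2(1,2) f1(3) f2(3)] by blast
qed

lemma ef_square_alloc2_chart_image:
  assumes v1: "value_density v1 (chart c u w r ` unit_square)"
    and v2: "value_density v2 (chart c u w r ` unit_square)"
    and split: "proportional_envy_free_split (\<lambda>x. v1 (chart c u w r x)) (\<lambda>x. v2 (chart c u w r x)) P Q"
  shows "ef_square_alloc2 (chart c u w r ` unit_square) v1 v2 (chart c u w r ` P) (chart c u w r ` Q)"
    and "1/4 \<le> min (val v1 (chart c u w r ` P) / val v1 (chart c u w r ` unit_square))
                    (val v2 (chart c u w r ` Q) / val v2 (chart c u w r ` unit_square))"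
proof -
  let ?C = "chart c u w r ` unit_square"
  let ?f1 = "\<lambda>x. v1 (chart c u w r x)" and ?f2 = "\<lambda>x. v2 (chart c u w r x)"
  have square: "is_square (chart c u w r ` R)" "chart c u w r ` R \<subseteq> ?C" if "subsquare R" for R
    using that is_square_chart_image by (auto simp: subsquare_def)
  have PQ: "subsquare P" "subsquare Q" "interior P \<inter> interior Q = {}"
    using split by (simp_all add: proportional_envy_free_split_def)
  note val1 = val_chart_image_subsquare[OF v1] and val2 = val_chart_image_subsquare[OF v2]
  have "val v1 (chart c u w r ` Q) \<le> val v1 (chart c u w r ` P)"
    "val v2 (chart c u w r ` P) \<le> val v2 (chart c u w r ` Q)"
    using split r_pos by (simp_all add: proportional_envy_free_split_def val1 val2 PQ)
  then show "ef_square_alloc2 ?C v1 v2 (chart c u w r ` P) (chart c u w r ` Q)"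
    unfolding ef_square_alloc2_def
    using square[OF PQ(1)] square[OF PQ(2)] interior_chart_image_disjoint[OF PQ(3)]
      val_S_square[OF v1] val_S_square[OF v2]
    by auto
  have "0 < integral unit_square ?f1" "0 < integral unit_square ?f2"
    using value_density_pullback[OF v1] value_density_pullback[OF v2] by metis+
  then show "1/4 \<le> min (val v1 (chart c u w r ` P) / val v1 ?C) (val v2 (chart c u w r ` Q) / val v2 ?C)"
    using split r_pos
    by (simp add: proportional_envy_free_split_def val1 val2 PQ subsquare_unit_square field_simps)
qed

end

lemma (in square_frame) recentred_chart:
  assumes x0: "x0 \<in> {0, 1/2}" and y0: "y0 \<in> {0, 1/2}"
  obtains u' w' c' where "square_frame u' w' r"
    "chart c' u' w' r ` unit_square = chart c u w r ` unit_square"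
    "chart c' u' w' r ` axis_square 0 0 (1/2) = chart c u w r ` axis_square x0 y0 (1/2)"
    "\<And>x y. x \<in> {0, 1/2} \<Longrightarrow> y \<in> {0, 1/2} \<Longrightarrow>
      \<exists>x' \<in> {0, 1/2}. \<exists>y' \<in> {0, 1/2}. chart c' u' w' r ` axis_square x y (1/2) = chart c u w r ` axis_square x' y' (1/2)"
proof
  \<comment> \<open>Recentre at the corner (a, b) of the unit square and reverse the axes pointing out of it.\<close>
  define a b where "a = 2 * x0" and "b = 2 * y0"
  have ab: "a \<in> {0, 1}" "b \<in> {0, 1}"
    using x0 y0 by (auto simp: a_def b_def)
  show "square_frame ((1 - 2 * a) *\<^sub>R u) ((1 - 2 * b) *\<^sub>R w) r"
    using square_frame_reflect[OF ab] .
  have image_reflect: "chart (chart c u w r (vector [a, b])) ((1 - 2 * a) *\<^sub>R u) ((1 - 2 * b) *\<^sub>R w) r ` S =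
      chart c u w r ` reflect a b ` S" for S
    by (auto simp: image_image chart_reflect)
  show "chart (chart c u w r (vector [a, b])) ((1 - 2 * a) *\<^sub>R u) ((1 - 2 * b) *\<^sub>R w) r ` unit_square =
      chart c u w r ` unit_square"
    by (simp add: image_reflect reflect_image_axis_square[OF ab])
  show "chart (chart c u w r (vector [a, b])) ((1 - 2 * a) *\<^sub>R u) ((1 - 2 * b) *\<^sub>R w) r ` axis_square 0 0 (1/2) =
      chart c u w r ` axis_square x0 y0 (1/2)"
  proof -
    have "reflect a b ` axis_square 0 0 (1/2) = axis_square x0 y0 (1/2)"
      using reflect_image_axis_square[OF ab] by (simp add: a_def b_def)
    then show ?thesis
      by (simp add: image_reflect)
  qed
  fix x y :: real assume "x \<in> {0, 1/2}" "y \<in> {0, 1/2}"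
  then have "a/2 + (1 - 2 * a) * x \<in> {0, 1/2}" "b/2 + (1 - 2 * b) * y \<in> {0, 1/2}"
    using ab by auto
  moreover have "reflect a b ` axis_square x y (1/2) =
      axis_square (a/2 + (1 - 2 * a) * x) (b/2 + (1 - 2 * b) * y) (1/2)"
    using reflect_image_axis_square[OF ab] by simp
  ultimately show "\<exists>x' \<in> {0, 1/2}. \<exists>y' \<in> {0, 1/2}.
      chart (chart c u w r (vector [a, b])) ((1 - 2 * a) *\<^sub>R u) ((1 - 2 * b) *\<^sub>R w) r ` axis_square x y (1/2) =
      chart c u w r ` axis_square x' y' (1/2)"
    unfolding image_reflect by blast
qed

lemma is_square_chart_best_quarter:
  fixes q :: "(real^2) set \<Rightarrow> real"
  assumes "is_square C"
  obtains c u w r where "square_frame u w r" "C = chart c u w r ` unit_square"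
    "\<And>x y. x \<in> {0, 1/2} \<Longrightarrow> y \<in> {0, 1/2} \<Longrightarrow>
      q (chart c u w r ` axis_square x y (1/2)) \<le> q (chart c u w r ` axis_square 0 0 (1/2))"
proof -
  obtain c u w r where frame: "square_frame u w r" and C: "C = chart c u w r ` unit_square"
    using is_squareE[OF assms] .
  define Z where "Z = {0, 1/2 :: real} \<times> {0, 1/2 :: real}"
  define quarter where "quarter z = q (chart c u w r ` axis_square (fst z) (snd z) (1/2))" for z
  have "finite Z"
    by (simp add: Z_def)
  moreover have "Max (quarter ` Z) \<in> quarter ` Z"
    using \<open>finite Z\<close> by (intro Max_in) (auto simp: Z_def)
  then obtain x0 y0 where "(x0, y0) \<in> Z" and max: "quarter (x0, y0) = Max (quarter ` Z)"
    by auto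
  ultimately have "quarter z \<le> quarter (x0, y0)" if "z \<in> Z" for z
    using that by (simp add: max)
  then have best: "quarter (x, y) \<le> quarter (x0, y0)" if "x \<in> {0, 1/2}" "y \<in> {0, 1/2}" for x y
    using that unfolding Z_def by blast
  have "x0 \<in> {0, 1/2}" "y0 \<in> {0, 1/2}"
    using \<open>(x0, y0) \<in> Z\<close> unfolding Z_def by blast+
  then obtain u' w' c' where frame': "square_frame u' w' r"
    and C': "chart c' u' w' r ` unit_square = chart c u w r ` unit_square"
    and origin: "chart c' u' w' r ` axis_square 0 0 (1/2) = chart c u w r ` axis_square x0 y0 (1/2)"
    and quarters: "\<And>x y. x \<in> {0, 1/2} \<Longrightarrow> y \<in> {0, 1/2} \<Longrightarrow>
      \<exists>x' \<in> {0, 1/2}. \<exists>y' \<in> {0, 1/2}. chart c' u' w' r ` axis_square x y (1/2) = chart c u w r ` axis_square x' y' (1/2)"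
    by (rule square_frame.recentred_chart[OF frame, where c = c]) (rule that)
  show thesis
  proof (rule that[OF frame'])
    show "C = chart c' u' w' r ` unit_square"
      by (simp add: C C')
    fix x y :: real assume "x \<in> {0, 1/2}" "y \<in> {0, 1/2}"
    then obtain x' y' where x'y': "x' \<in> {0, 1/2}" "y' \<in> {0, 1/2}"
      and eq: "chart c' u' w' r ` axis_square x y (1/2) = chart c u w r ` axis_square x' y' (1/2)"
      using quarters by metis
    have "q (chart c' u' w' r ` axis_square x y (1/2)) = quarter (x', y')"
      by (simp add: eq quarter_def)
    also have "\<dots> \<le> quarter (x0, y0)"
      using best[OF x'y'] .
    also have "\<dots> = q (chart c' u' w' r ` axis_square 0 0 (1/2))"
      by (simp add: origin quarter_def)
    finally show "q (chart c' u' w' r ` axis_square x y (1/2)) \<le> q (chart c' u' w' r ` axis_square 0 0 (1/2))" .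
  qed
qed

theorem theorem1:
  fixes C :: "(real^2) set"
  assumes "is_square C"
  shows "\<forall>v1 v2. value_density v1 C \<and> value_density v2 C \<longrightarrow>
           (\<forall>\<epsilon>>0. \<exists>X1 X2. ef_square_alloc2 C v1 v2 X1 X2 \<and>
              min (val v1 X1 / val v1 C) (val v2 X2 / val v2 C) \<ge> 1/4 - \<epsilon>)"
proof (intro allI impI)
  fix v1 v2 :: "real^2 \<Rightarrow> real" and \<epsilon> :: real
  assume densities: "value_density v1 C \<and> value_density v2 C" and "0 < \<epsilon>"
  obtain c u w r where frame: "square_frame u w r" and C: "C = chart c u w r ` unit_square"
    and best_quarter: "\<And>x y. x \<in> {0, 1/2} \<Longrightarrow> y \<in> {0, 1/2} \<Longrightarrow>
      val v1 (chart c u w r ` axis_square x y (1/2)) \<le> val v1 (chart c u w r ` axis_square 0 0 (1/2))"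
    by (rule is_square_chart_best_quarter[OF assms, of "val v1"]) (rule that)
  interpret square_frame u w r
    by (rule frame)
  have v1: "value_density v1 (chart c u w r ` unit_square)" and v2: "value_density v2 (chart c u w r ` unit_square)"
    using densities by (simp_all add: C)
  obtain P Q where "proportional_envy_free_split (\<lambda>x. v1 (chart c u w r x)) (\<lambda>x. v2 (chart c u w r x)) P Q"
    using proportional_envy_free_split_pullback_exists[OF v1 v2 best_quarter] by blast
  note allocation = ef_square_alloc2_chart_image[OF v1 v2 this, folded C]
  show "\<exists>X1 X2. ef_square_alloc2 C v1 v2 X1 X2 \<and> min (val v1 X1 / val v1 C) (val v2 X2 / val v2 C) \<ge> 1/4 - \<epsilon>"
  proof (intro exI conjI)
    show "ef_square_alloc2 C v1 v2 (chart c u w r ` P) (chart c u w r ` Q)"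
      by (rule allocation(1))
    show "1/4 - \<epsilon> \<le> min (val v1 (chart c u w r ` P) / val v1 C) (val v2 (chart c u w r ` Q) / val v2 C)"
      using allocation(2) \<open>0 < \<epsilon>\<close> by linarith
  qed
qed

end
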